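(* Let $d\ge1$ and let $f:\mathbb{R}^d\to\mathbb{R}$ be additive, i.e. $f(x+y)=f(x)+f(y)$ for all $x,y\in\mathbb{R}^d$, and let $G(f)=\{(x,f(x)):x\in\mathbb{R}^d\}\subseteq\mathbb{R}^{d+1}$. (a) There exists $s\in\{0,1,\dots,d+1\}$ and an $s$-dimensional vector subspace $V\subseteq\mathbb{R}^{d+1}$ such that the connected component $G$ of $G(f)$ containing the origin is a subgroup of $V$ which is dense in $V$. Moreover, every connected component of $G(f)$ is of the form $\tau+G$ for some $\tau\in\mathbb{R}^{d+1}$. (b) For every $s\in\{0,1,\dots,d+1\}$ there exists an additive function $f:\mathbb{R}^d\to\mathbb{R}$ for which the number $s$ in (a) takes this value.
   Context: $\mathbb{R}^{d+1}$ carries the Euclidean topology and $G(f)$ the subspace topology; connected components are taken in $G(f)$. *)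

theory Defs
  imports "HOL-Analysis.Analysis"
begin

text \<open>The graph G(f) of f : R^d -> R, as a subset of R^d x R (= R^(d+1)).\<close>
definition fgraph :: "(real^'n \<Rightarrow> real) \<Rightarrow> ((real^'n) \<times> real) set" where
  "fgraph f = {(x, f x) | x. True}"

definition comp_struct :: "(real^'n \<Rightarrow> real) \<Rightarrow> nat \<Rightarrow> ((real^'n) \<times> real) set \<Rightarrow> bool" where
  "comp_struct f s V \<longleftrightarrow>
     (let G = connected_component_set (fgraph f) 0 in
        subspace V \<and> dim V = s \<and>
        G \<subseteq> V \<and> 0 \<in> G \<and> (\<forall>x\<in>G. \<forall>y\<in>G. x + y \<in> G) \<and> (\<forall>x\<in>G. - x \<in> G) \<and>
        V \<subseteq> closure G \<and>
        (\<forall>C\<in>components (fgraph f). \<exists>\<tau>. C = (\<lambda>g. \<tau> + g) ` G))"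

end

theory Submission
  imports Defs "HOL-Library.Equipollence"
begin

text \<open>Additivity gives rational homogeneity, so the graph \<open>\<Gamma>\<close> of \<open>f\<close> is a vector space over \<open>\<rat>\<close>.
  Translations by points of \<open>\<Gamma>\<close> are homeomorphisms of \<open>\<Gamma>\<close>, hence every component is a translate
  of the component \<open>G\<close> of the origin, and \<open>G\<close> is again a \<open>\<rat>\<close>-subspace because it is mapped into
  itself by these translations and by the scalings \<open>z \<mapsto> q z\<close>. The closure of a \<open>\<rat>\<close>-subspace is
  a real subspace \<open>V\<close>, in which \<open>G\<close> is dense.

  For the examples, \<open>s = d + 1\<close> comes from F. B. Jones' additive function \<open>J : \<real> \<rightarrow> \<real>\<close>, built
  by a transfinite recursion of length continuum whose graph meets every closed plane set with an
  interval in its shadow on the first axis: such a graph is connected and dense, and so is the graph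
  of \<open>x \<mapsto> J x\<^sub>1\<close>. For \<open>s \<le> d\<close> take \<open>f x = \<Sum>\<^bsub>e \<notin> D\<^esub> r(x\<^sub>e) \<beta>\<^sub>e\<close> with \<open>r\<close> a \<open>\<rat>\<close>-valued \<open>\<rat>\<close>-linear
  functional and \<open>\<rat>\<close>-independent \<open>\<beta>\<^sub>e\<close>: a proper \<open>\<rat>\<close>-subspace of \<open>\<real>\<close> contains no interval, so
  the connected set \<open>G\<close> must lie in \<open>{(x, 0) | x\<^sub>e = 0 for e \<notin> D}\<close>, an \<open>s\<close>-dimensional space that is
  itself contained in the graph.\<close>

section \<open>Rational subspaces and their connected components\<close>

interpretation rat_vector: vector_space "\<lambda>q::rat. \<lambda>x::'a::real_vector. of_rat q *\<^sub>R x"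
  by unfold_locales (simp_all add: scaleR_add_right scaleR_add_left of_rat_add of_rat_mult)

interpretation rat_vector: vector_space_pair
    "\<lambda>q::rat. \<lambda>x::'a::real_vector. of_rat q *\<^sub>R x" "\<lambda>q::rat. \<lambda>x::'b::real_vector. of_rat q *\<^sub>R x"
  by unfold_locales

lemma additive_scaleR_of_rat:
  fixes f :: "'a::real_vector \<Rightarrow> 'b::real_vector"
  assumes "Modules.additive f"
  shows "f (of_rat q *\<^sub>R x) = of_rat q *\<^sub>R f x"
proof -
  interpret Modules.additive f by fact
  have nat: "f (of_nat n *\<^sub>R x) = of_nat n *\<^sub>R f x" for n x
    by (induction n) (simp_all add: zero add scaleR_add_left)
  have int: "f (of_int k *\<^sub>R x) = of_int k *\<^sub>R f x" for k x
    by (cases k rule: int_cases2) (simp_all add: nat minus)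
  obtain a b where ab: "quotient_of q = (a, b)" by (cases "quotient_of q")
  have b: "b > 0" by (rule quotient_of_denom_pos[OF ab])
  have q: "of_rat q = (of_int a / of_int b :: real)"
    by (simp add: quotient_of_div[OF ab] of_rat_divide)
  have "of_int b *\<^sub>R f (of_rat q *\<^sub>R x) = f (of_int a *\<^sub>R x)"
    using b by (simp add: int[symmetric] q)
  then have "f (of_rat q *\<^sub>R x) = inverse (of_int b) *\<^sub>R f (of_int a *\<^sub>R x)"
    using b by (metis of_int_0_less_iff less_irrefl scaleR_scaleR left_inverse scaleR_one)
  then show ?thesis using b by (simp add: int q divide_inverse mult.commute)
qed

lemma rat_vector_subspace_graph:
  fixes f :: "'a::real_vector \<Rightarrow> 'b::real_vector"
  assumes "Modules.additive f"
  shows "rat_vector.subspace {(x, f x) | x. True}"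
proof -
  interpret Modules.additive f by fact
  show ?thesis
    unfolding rat_vector.subspace_def
    by (force simp: zero add additive_scaleR_of_rat[OF assms] zero_prod_def)
qed

lemma rat_vector_subspace_kernel:
  fixes r :: "'a::real_vector \<Rightarrow> 'b::real_vector"
  assumes "Modules.additive r"
  shows "rat_vector.subspace {t. r t = 0}"
proof -
  interpret Modules.additive r by fact
  show ?thesis
    unfolding rat_vector.subspace_def by (simp add: zero add additive_scaleR_of_rat[OF assms])
qed

lemma connected_component_translate:
  fixes S :: "'a::real_normed_vector set"
  assumes "rat_vector.subspace S" "x \<in> S"
  shows "connected_component_set S x = (+) x ` connected_component_set S 0"
proof -
  have "homeomorphism S S ((+) x) ((+) (- x))"
    using assms rat_vector.subspace_add rat_vector.subspace_neg rat_vector.subspace_diff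
    by (auto intro!: homeomorphismI continuous_intros image_eqI[where x="- x + _"])
  then show ?thesis
    using connected_component_set_homeomorphism[of S S "(+) x" _ 0] assms
    by (simp add: rat_vector.subspace_0)
qed

lemma rat_vector_subspace_connected_component:
  fixes S :: "'a::real_normed_vector set"
  assumes S: "rat_vector.subspace S"
  shows "rat_vector.subspace (connected_component_set S 0)"
    (is "rat_vector.subspace ?G")
proof -
  have "0 \<in> ?G"
    using S by (simp add: rat_vector.subspace_0)
  moreover have "x + y \<in> ?G" if "x \<in> ?G" "y \<in> ?G" for x y
  proof -
    have "x \<in> S"
      using that(1) connected_component_subset by blast
    have "?G = connected_component_set S x"
      using that(1) by (rule connected_component_eq[symmetric])
    also have "\<dots> = (+) x ` ?G"
      using \<open>x \<in> S\<close> by (rule connected_component_translate[OF S])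
    finally have "?G = (+) x ` ?G" .
    then show ?thesis
      using that(2) by blast
  qed
  moreover have "(\<lambda>x. of_rat q *\<^sub>R x) ` ?G \<subseteq> ?G" for q
  proof (rule connected_component_maximal)
    show "0 \<in> (\<lambda>x. of_rat q *\<^sub>R x) ` ?G"
      using \<open>0 \<in> ?G\<close> by force
    show "connected ((\<lambda>x. of_rat q *\<^sub>R x) ` ?G)"
      by (intro connected_continuous_image continuous_intros connected_connected_component)
    show "(\<lambda>x. of_rat q *\<^sub>R x) ` ?G \<subseteq> S"
      using S connected_component_subset rat_vector.subspace_scale by blast
  qed
  ultimately show ?thesis
    unfolding rat_vector.subspace_def by blast
qed

lemma components_rat_vector_subspace:
  fixes S :: "'a::real_normed_vector set"
  assumes "rat_vector.subspace S" "C \<in> components S"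
  shows "\<exists>\<tau>. C = (+) \<tau> ` connected_component_set S 0"
proof -
  obtain x where "x \<in> S" "C = connected_component_set S x"
    using assms(2) by (auto simp: components_def)
  then show ?thesis
    using connected_component_translate[OF assms(1)] by blast
qed

lemma subspace_closure_rat_vector_subspace:
  fixes S :: "'a::real_normed_vector set"
  assumes S: "rat_vector.subspace S"
  shows "subspace (closure S)"
  unfolding subspace_def
proof (intro conjI ballI allI)
  show "0 \<in> closure S"
    using rat_vector.subspace_0[OF S] closure_subset by blast
next
  fix x y assume "x \<in> closure S" "y \<in> closure S"
  then obtain u v where "\<forall>n. u n \<in> S" "u \<longlonglongrightarrow> x" "\<forall>n. v n \<in> S" "v \<longlonglongrightarrow> y"
    by (auto simp: closure_sequential)
  then show "x + y \<in> closure S"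
    unfolding closure_sequential
    by (intro exI[of _ "\<lambda>n. u n + v n"]) (auto intro: tendsto_add rat_vector.subspace_add[OF S])
next
  fix c :: real and x assume "x \<in> closure S"
  then obtain u where u: "\<forall>n. u n \<in> S" "u \<longlonglongrightarrow> x"
    by (auto simp: closure_sequential)
  have "c \<in> closure \<rat>"
    unfolding Rats_closure_real by (rule UNIV_I)
  then obtain r where r: "\<forall>n. r n \<in> \<rat>" "r \<longlonglongrightarrow> c"
    by (auto simp: closure_sequential)
  have "r n *\<^sub>R u n \<in> S" for n
    using r(1) u(1) rat_vector.subspace_scale[OF S] by (metis Rats_cases)
  then show "c *\<^sub>R x \<in> closure S"
    unfolding closure_sequential using r(2) u(2)
    by (intro exI[of _ "\<lambda>n. r n *\<^sub>R u n"]) (auto intro: tendsto_scaleR)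
qed

lemma comp_struct_closure_connected_component:
  fixes f :: "real^'n \<Rightarrow> real"
  assumes "Modules.additive f"
  defines "V \<equiv> closure (connected_component_set (fgraph f) 0)"
  shows "comp_struct f (dim V) V"
proof -
  let ?G = "connected_component_set (fgraph f) 0"
  have graph: "rat_vector.subspace (fgraph f)"
    unfolding fgraph_def using assms(1) by (rule rat_vector_subspace_graph)
  then have G: "rat_vector.subspace ?G"
    by (rule rat_vector_subspace_connected_component)
  show ?thesis
    unfolding comp_struct_def Let_def V_def
  proof (intro conjI refl subset_refl ballI)
    show "subspace (closure ?G)"
      by (rule subspace_closure_rat_vector_subspace[OF G])
    show "?G \<subseteq> closure ?G"
      by (rule closure_subset)
    show "0 \<in> ?G" "\<And>x y. x \<in> ?G \<Longrightarrow> y \<in> ?G \<Longrightarrow> x + y \<in> ?G"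
      "\<And>x. x \<in> ?G \<Longrightarrow> - x \<in> ?G"
      using rat_vector.subspace_0[OF G] rat_vector.subspace_add[OF G] rat_vector.subspace_neg[OF G]
      by blast+
    show "\<exists>\<tau>. C = (\<lambda>g. \<tau> + g) ` ?G" if "C \<in> components (fgraph f)" for C
      using components_rat_vector_subspace[OF graph that] by blast
  qed
qed

section \<open>The reals as a vector space over the rationals\<close>

lemma rat_vector_subspace_eq_UNIV_if_interval:
  fixes S :: "real set"
  assumes S: "rat_vector.subspace S" and "a < b" "{a<..<b} \<subseteq> S"
  shows "S = UNIV"
proof -
  define m d where "m = (a + b) / 2" and "d = (b - a) / 2"
  have "d > 0" "m \<in> S"
    using assms by (auto simp: m_def d_def)
  have small: "t \<in> S" if "\<bar>t\<bar> < d" for t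
  proof -
    have "m + t \<in> {a<..<b}"
      using that by (auto simp: m_def d_def abs_less_iff field_simps)
    then have "m + t \<in> S"
      using assms(3) by blast
    then show ?thesis
      using rat_vector.subspace_diff[OF S _ \<open>m \<in> S\<close>] by force
  qed
  have "x \<in> S" for x
  proof -
    obtain n :: nat where n: "\<bar>x\<bar> / d < n"
      using reals_Archimedean2 by blast
    then have "n > 0"
      using \<open>d > 0\<close> by (cases n) (auto simp: divide_less_0_iff)
    then have "x / n \<in> S"
      using n \<open>d > 0\<close> by (intro small) (simp add: field_simps abs_divide)
    then have "of_rat (of_nat n) *\<^sub>R (x / n) \<in> S"
      by (rule rat_vector.subspace_scale[OF S])
    then show ?thesis
      using \<open>n > 0\<close> by simp
  qed
  then show ?thesis by blast
qed

lemma connected_subset_proper_rat_vector_subspace: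
  fixes S C :: "real set"
  assumes "rat_vector.subspace S" "S \<noteq> UNIV" and C: "connected C" "C \<subseteq> S" "0 \<in> C"
  shows "C \<subseteq> {0}"
proof
  fix t assume "t \<in> C"
  have "{min 0 t..max 0 t} \<subseteq> C"
    using connected_contains_Icc[OF C(1)] \<open>t \<in> C\<close> C(3) by (cases "t \<le> 0") auto
  then have "{min 0 t<..<max 0 t} \<subseteq> S"
    using C(2) by (fastforce simp: subset_eq)
  show "t \<in> {0}"
  proof (rule ccontr)
    assume "t \<notin> {0}"
    then have "min 0 t < max 0 t"
      by (auto simp: min_def max_def)
    then show False
      using rat_vector_subspace_eq_UNIV_if_interval[OF assms(1)] \<open>{min 0 t<..<max 0 t} \<subseteq> S\<close> assms(2)
      by blast
  qed
qed

primrec rat_sums :: "'a::real_vector set \<Rightarrow> nat \<Rightarrow> 'a set" where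
  "rat_sums X 0 = {0}"
| "rat_sums X (Suc n) = (\<lambda>(s, q, x). of_rat q *\<^sub>R x + s) ` (rat_sums X n \<times> UNIV \<times> X)"

lemma rat_span_subset_rat_sums: "rat_vector.span X \<subseteq> (\<Union>n. rat_sums X n)"
proof
  fix v assume "v \<in> rat_vector.span X"
  then show "v \<in> (\<Union>n. rat_sums X n)"
  proof (induction rule: rat_vector.span_induct_alt)
    case base
    show ?case by (auto intro!: exI[of _ 0])
  next
    case (step q x y)
    then obtain n where "y \<in> rat_sums X n" by blast
    then have "of_rat q *\<^sub>R x + y \<in> rat_sums X (Suc n)"
      using step(1) by (auto intro!: image_eqI[where x="(y, q, x)"])
    then show ?case by blast
  qed
qed

lemma lepoll_iff_card_of_ordLeq: "A \<lesssim> B \<longleftrightarrow> ordLeq3 (card_of A) (card_of B)"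
  unfolding lepoll_def by (simp add: card_of_ordLeq[symmetric])

lemma times_lepoll_infinite:
  assumes "infinite Y" "A \<lesssim> Y" "B \<lesssim> Y"
  shows "A \<times> B \<lesssim> Y"
proof -
  have "A \<times> B \<lesssim> Y \<times> Y"
    using assms(2,3) by (rule times_lepoll_mono)
  also have "Y \<times> Y \<lesssim> Y"
    using card_of_Times_same_infinite[OF assms(1)]
    unfolding lepoll_iff_card_of_ordLeq ordIso_iff_ordLeq by (rule conjunct1)
  finally show ?thesis .
qed

lemma rat_span_lepoll:
  fixes X :: "'a::real_vector set"
  assumes Y: "infinite Y" and X: "X \<lesssim> Y"
  shows "rat_vector.span X \<lesssim> Y"
proof -
  have "(UNIV :: rat set) \<lesssim> (UNIV :: nat set)"
    using countableI_type[of "UNIV :: rat set"] by (auto simp: countable_def lepoll_def)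
  also have "(UNIV :: nat set) \<lesssim> Y"
    using Y infinite_le_lepoll by blast
  finally have rat: "(UNIV :: rat set) \<lesssim> Y" .
  have level: "rat_sums X n \<lesssim> Y" for n
  proof (induction n)
    case 0
    show ?case using Y by (simp add: finite_lepoll_infinite)
  next
    case (Suc n)
    have "rat_sums X (Suc n) \<lesssim> rat_sums X n \<times> (UNIV :: rat set) \<times> X"
      unfolding rat_sums.simps by (rule image_lepoll)
    also have "\<dots> \<lesssim> Y"
      using Suc Y X rat by (intro times_lepoll_infinite) auto
    finally show ?case .
  qed
  have "ordLeq3 (card_of (\<Union>n\<in>(UNIV::nat set). rat_sums X n)) (card_of Y)"
    using level Y infinite_le_lepoll[of Y] unfolding lepoll_iff_card_of_ordLeq
    by (intro card_of_UNION_ordLeq_infinite) auto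
  then have "(\<Union>n. rat_sums X n) \<lesssim> Y"
    unfolding lepoll_iff_card_of_ordLeq by simp
  then show ?thesis
    by (rule lepoll_trans[OF subset_imp_lepoll[OF rat_span_subset_rat_sums]])
qed

lemma countable_rat_span:
  fixes X :: "'a::real_vector set"
  assumes "countable X"
  shows "countable (rat_vector.span X)"
proof -
  have "X \<lesssim> (UNIV :: nat set)"
    using assms by (auto simp: countable_def lepoll_def)
  then have "rat_vector.span X \<lesssim> (UNIV :: nat set)"
    by (intro rat_span_lepoll) simp_all
  then show ?thesis
    by (rule countable_lepoll[rotated]) simp
qed

lemma rat_span_neq_UNIV:
  fixes X :: "real set"
  assumes "ordLess2 (card_of X) (card_of (UNIV :: real set))"
  shows "rat_vector.span X \<noteq> UNIV"
proof (cases "finite X")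
  case True
  then have "countable (rat_vector.span X)"
    by (intro countable_rat_span countable_finite)
  then show ?thesis
    using uncountable_UNIV_real by metis
next
  case False
  then have "ordLeq3 (card_of (rat_vector.span X)) (card_of X)"
    unfolding lepoll_iff_card_of_ordLeq[symmetric] by (intro rat_span_lepoll) simp_all
  then have "ordLess2 (card_of (rat_vector.span X)) (card_of (UNIV :: real set))"
    using assms by (rule ordLeq_ordLess_trans)
  then show ?thesis
    using ordLess_irreflexive by fastforce
qed

lemma wo_rel_finite_has_greatest:
  assumes W: "wo_rel W" "Field W = UNIV" and "finite A" "A \<noteq> {}"
  shows "\<exists>m\<in>A. \<forall>b\<in>A. (b, m) \<in> W"
  using assms(3,4)
proof (induction A rule: finite_ne_induct)
  case (singleton x)
  show ?case
    using wo_rel.REFL[OF W(1)] W(2) by (simp add: refl_on_def)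
next
  case (insert x F)
  then obtain m where m: "m \<in> F" "\<forall>b\<in>F. (b, m) \<in> W"
    by blast
  let ?m' = "wo_rel.max2 W x m"
  have "(x, ?m') \<in> W" "(m, ?m') \<in> W" "?m' \<in> insert x F"
    using wo_rel.max2_greater[OF W(1), of x m] wo_rel.max2_among[OF W(1), of x m] W(2) m(1)
    by auto
  then show ?case
    using m(2) wo_rel.TRANS[OF W(1)] unfolding trans_def by blast
qed

context
  fixes W :: "'i rel" and x :: "'i \<Rightarrow> 'a::real_vector"
  assumes W: "wo_rel W" "Field W = UNIV"
    and x_new: "\<And>a. x a \<notin> rat_vector.span (x ` underS W a)"
begin

lemma inj_if_not_in_span_of_predecessors: "inj x"
proof (rule injI, rule ccontr)
  have less: "x a \<noteq> x b" if "a \<in> underS W b" for a b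
  proof -
    have "x a \<in> rat_vector.span (x ` underS W b)"
      using that by (intro rat_vector.span_base imageI)
    then show ?thesis
      using x_new[of b] by auto
  qed
  fix a b assume "x a = x b" "a \<noteq> b"
  then have "a \<in> underS W b \<or> b \<in> underS W a"
    using wo_rel.TOTALS[OF W(1)] W(2) by (auto simp: underS_def)
  then show False
    using less \<open>x a = x b\<close> by metis
qed

lemma rat_independent_if_not_in_span_of_predecessors: "rat_vector.independent (range x)"
proof -
  have finite_independent: "rat_vector.independent (x ` A)" if "finite A" for A
    using that
  proof (induction rule: finite_remove_induct)
    case empty
    show ?case by (simp add: rat_vector.independent_empty)
  next
    case (remove A)
    obtain m where m: "m \<in> A" "\<forall>b\<in>A. (b, m) \<in> W"
      using wo_rel_finite_has_greatest[OF W remove(1,2)] by blast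
    have "A - {m} \<subseteq> underS W m"
      using m by (auto simp: underS_def)
    then have "x m \<notin> rat_vector.span (x ` (A - {m}))"
      using x_new[of m] rat_vector.span_mono[OF image_mono] by blast
    then have "rat_vector.independent (insert (x m) (x ` (A - {m})))"
      using remove.IH[OF m(1)] by (rule rat_vector.independent_insertI)
    moreover have "insert (x m) (x ` (A - {m})) = x ` A"
      using m(1) by blast
    ultimately show ?case by simp
  qed
  show ?thesis
    unfolding rat_vector.independent_explicit_finite_subsets
  proof (intro allI impI)
    fix S u
    assume S: "S \<subseteq> range x" "finite S" and u: "(\<Sum>v\<in>S. of_rat (u v) *\<^sub>R v) = 0"
    obtain A where "finite A" "S = x ` A"
      using finite_subset_image[OF S(2,1)] by blast
    then have "rat_vector.independent S"
      using finite_independent by blast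
    then show "\<forall>v\<in>S. u v = 0"
      using rat_vector.independentD[OF _ S(2) subset_refl u] by blast
  qed
qed

end

section \<open>Jones' additive function with connected dense graph\<close>

definition jones_sets :: "(real \<times> real) set set" where
  "jones_sets = {K. closed K \<and> (\<exists>a b. a < b \<and> {a<..<b} \<subseteq> fst ` K)}"

lemma UNIV_in_jones_sets: "UNIV \<in> jones_sets"
proof -
  have "x \<in> fst ` (UNIV :: (real \<times> real) set)" for x
    by (rule image_eqI[of _ _ "(x, 0)"]) simp_all
  then have "{0<..<1} \<subseteq> fst ` (UNIV :: (real \<times> real) set)"
    by blast
  then show ?thesis
    unfolding jones_sets_def
    by (intro CollectI conjI closed_UNIV exI[of _ "0 :: real"] exI[of _ "1 :: real"]) simp_all
qed

lemma closed_family_lepoll_reals: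
  fixes \<K> :: "'a::second_countable_topology set set"
  assumes "\<And>K. K \<in> \<K> \<Longrightarrow> closed K"
  shows "\<K> \<lesssim> (UNIV :: real set)"
proof -
  obtain \<B> :: "'a set set"
    where \<B>: "countable \<B>" "\<And>C. C \<in> \<B> \<Longrightarrow> open C" "\<And>S. open S \<Longrightarrow> \<exists>U. U \<subseteq> \<B> \<and> S = \<Union>U"
    by (rule univ_second_countable) auto
  define code where "code K = {C \<in> \<B>. C \<subseteq> - K}" for K
  have decode: "- K = \<Union>(code K)" if K: "K \<in> \<K>" for K
  proof -
    obtain U where "U \<subseteq> \<B>" "- K = \<Union>U"
      using \<B>(3)[OF open_Compl[OF assms[OF K]]] by blast
    then show ?thesis
      unfolding code_def by blast
  qed
  have "inj_on code \<K>"
  proof (rule inj_onI)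
    fix K L assume "K \<in> \<K>" "L \<in> \<K>" "code K = code L"
    then have "- K = - L"
      using decode by simp
    then show "K = L"
      by simp
  qed
  moreover have "code ` \<K> \<subseteq> Pow \<B>"
    unfolding code_def by blast
  ultimately have "\<K> \<lesssim> Pow \<B>"
    unfolding lepoll_def by blast
  also have "Pow \<B> \<lesssim> (UNIV :: nat set set)"
  proof -
    have "inj_on (to_nat_on \<B>) \<B>"
      using \<B>(1) by (rule inj_on_to_nat_on)
    then have "inj_on ((`) (to_nat_on \<B>)) (Pow \<B>)"
      by (auto simp: inj_on_def inj_on_image_eq_iff)
    then show ?thesis
      unfolding lepoll_def by blast
  qed
  also have "(UNIV :: nat set set) \<lesssim> (UNIV :: real set)"
    using nat_sets_eqpoll_reals by (rule eqpoll_imp_lepoll)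
  finally show ?thesis .
qed

text \<open>Every proper initial segment of this well-order of \<open>\<real>\<close> has fewer than continuum many
  elements, so the transfinite recursion below never exhausts the rational span of the
  points chosen before.\<close>
abbreviation real_card_order :: "real rel" where
  "real_card_order \<equiv> card_of UNIV"

definition jones_step ::
    "(real \<Rightarrow> (real \<times> real) set) \<Rightarrow> (real \<Rightarrow> real \<times> real) \<Rightarrow> real \<Rightarrow> real \<times> real" where
  "jones_step K p a =
     (SOME z. z \<in> K a \<and> fst z \<notin> rat_vector.span ((\<lambda>b. fst (p b)) ` underS real_card_order a))"

definition jones_points :: "(real \<Rightarrow> (real \<times> real) set) \<Rightarrow> real \<Rightarrow> real \<times> real" where
  "jones_points K = wfrec (real_card_order - Id) (jones_step K)"

lemma wo_rel_real_card_order: "wo_rel real_card_order"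
  unfolding wo_rel_def by (rule card_of_Well_order)

lemma jones_points_unfold: "jones_points K a = jones_step K (jones_points K) a"
proof -
  have "jones_points K a = jones_step K (cut (jones_points K) (real_card_order - Id) a) a"
    unfolding jones_points_def by (rule wfrec[OF wo_rel.WF[OF wo_rel_real_card_order]])
  also have "\<dots> = jones_step K (jones_points K) a"
    unfolding jones_step_def by (rule arg_cong[where f=Eps]) (auto simp: underS_def cut_apply)
  finally show ?thesis .
qed

lemma
  assumes K: "\<And>a. K a \<in> jones_sets"
  shows jones_points_mem: "jones_points K a \<in> K a"
    and jones_points_not_in_span:
      "fst (jones_points K a) \<notin> rat_vector.span ((\<lambda>b. fst (jones_points K b)) ` underS real_card_order a)"
proof -
  let ?X = "(\<lambda>b. fst (jones_points K b)) ` underS real_card_order a"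
  have "ordLess2 (card_of (underS real_card_order a)) real_card_order"
    by (rule card_of_underS[OF card_of_Card_order]) (simp add: Field_card_of)
  with card_of_image have "ordLess2 (card_of ?X) real_card_order"
    by (rule ordLeq_ordLess_trans)
  then have "rat_vector.span ?X \<noteq> UNIV"
    by (rule rat_span_neq_UNIV)
  obtain \<alpha> \<beta> where "\<alpha> < \<beta>" "{\<alpha><..<\<beta>} \<subseteq> fst ` K a"
    using K[of a] unfolding jones_sets_def by blast
  have "\<not> fst ` K a \<subseteq> rat_vector.span ?X"
  proof
    assume "fst ` K a \<subseteq> rat_vector.span ?X"
    with \<open>{\<alpha><..<\<beta>} \<subseteq> fst ` K a\<close> have "rat_vector.span ?X = UNIV"
      by (intro rat_vector_subspace_eq_UNIV_if_interval[OF rat_vector.subspace_span \<open>\<alpha> < \<beta>\<close>]) blast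
    with \<open>rat_vector.span ?X \<noteq> UNIV\<close> show False ..
  qed
  then have "\<exists>z. z \<in> K a \<and> fst z \<notin> rat_vector.span ?X"
    by blast
  then have "jones_step K (jones_points K) a \<in> K a \<and>
      fst (jones_step K (jones_points K) a) \<notin> rat_vector.span ?X"
    unfolding jones_step_def by (rule someI_ex)
  then show "jones_points K a \<in> K a" "fst (jones_points K a) \<notin> rat_vector.span ?X"
    by (simp_all flip: jones_points_unfold)
qed

lemma exists_additive_graph_meets_jones_sets:
  "\<exists>J :: real \<Rightarrow> real. Modules.additive J \<and> (\<forall>K\<in>jones_sets. \<exists>x. (x, J x) \<in> K)"
proof -
  have "jones_sets \<lesssim> (UNIV :: real set)"
    by (rule closed_family_lepoll_reals) (simp add: jones_sets_def)
  then obtain g :: "real \<Rightarrow> (real \<times> real) set" where g: "jones_sets \<subseteq> range g"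
    unfolding lepoll_iff by blast
  define K where "K a = (if g a \<in> jones_sets then g a else UNIV)" for a
  have K: "K a \<in> jones_sets" for a
    using UNIV_in_jones_sets by (simp add: K_def)
  define x where "x a = fst (jones_points K a)" for a
  have x_new: "x a \<notin> rat_vector.span (x ` underS real_card_order a)" for a
    unfolding x_def by (rule jones_points_not_in_span[OF K])
  note order = wo_rel_real_card_order Field_card_of
  have indep: "rat_vector.independent (range x)"
    by (rule rat_independent_if_not_in_span_of_predecessors[OF order x_new])
  have "inj x"
    by (rule inj_if_not_in_span_of_predecessors[OF order x_new])
  \<comment> \<open>The chosen abscissae are \<open>\<rat>\<close>-independent, so a \<open>\<rat>\<close>-linear map may take the chosen
    ordinates on them.\<close>
  define J where "J = rat_vector.construct (range x) (\<lambda>v. snd (jones_points K (inv x v)))"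
  have "Vector_Spaces.linear (\<lambda>q x. of_rat q *\<^sub>R x) (\<lambda>q x. of_rat q *\<^sub>R x) J"
    unfolding J_def by (rule rat_vector.linear_construct[OF indep])
  then have "Modules.additive J"
    unfolding Modules.additive_def by (intro allI rat_vector.linear_add)
  have J_x: "(x a, J (x a)) = jones_points K a" for a
  proof -
    have "J (x a) = snd (jones_points K (inv x (x a)))"
      unfolding J_def by (rule rat_vector.construct_basis[OF indep rangeI])
    then have "J (x a) = snd (jones_points K a)"
      by (simp only: inv_f_f[OF \<open>inj x\<close>])
    then show ?thesis
      by (simp add: x_def)
  qed
  have "\<exists>z. (z, J z) \<in> K'" if K': "K' \<in> jones_sets" for K'
  proof -
    obtain c where "K' = g c"
      using g K' by blast
    then have "K c = K'"
      using K' by (simp add: K_def)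
    moreover have "(x c, J (x c)) \<in> K c"
      unfolding J_x by (rule jones_points_mem[OF K])
    ultimately show ?thesis
      by blast
  qed
  with \<open>Modules.additive J\<close> show ?thesis
    by blast
qed

lemma not_connected_disjoint_open_cover:
  fixes S :: "'a::euclidean_space set"
  assumes "\<not> connected S"
  obtains U V where "open U" "open V" "U \<inter> V = {}" "S \<subseteq> U \<union> V" "U \<inter> S \<noteq> {}" "V \<inter> S \<noteq> {}"
proof -
  obtain A B where AB: "open A" "open B" "S \<subseteq> A \<union> B" "A \<inter> B \<inter> S = {}"
    "A \<inter> S \<noteq> {}" "B \<inter> S \<noteq> {}"
    using assms unfolding connected_def by blast
  have "A \<inter> closure (B \<inter> S) = {}" "B \<inter> closure (A \<inter> S) = {}"
    using AB(4) by (simp_all add: open_Int_closure_eq_empty AB(1,2) Int_ac)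
  then have "A \<inter> S \<inter> closure (B \<inter> S) = {}" "B \<inter> S \<inter> closure (A \<inter> S) = {}"
    by blast+
  then obtain U V where "U \<inter> V = {}" "open U" "open V" "A \<inter> S \<subseteq> U" "B \<inter> S \<subseteq> V"
    by (rule separation_closures)
  with AB(3,5,6) show thesis
    by (intro that[of U V]) blast+
qed

lemma open_meets_closure_horizontally:
  fixes U :: "('a::topological_space \<times> 'b::topological_space) set"
  assumes "open U" "(s, y) \<in> U" "s \<in> closure X"
  shows "\<exists>x\<in>X. (x, y) \<in> U"
proof -
  have "open ((\<lambda>x. (x, y)) -` U)"
    using assms(1) by (intro open_vimage) (auto intro: continuous_intros)
  moreover have "s \<in> (\<lambda>x. (x, y)) -` U \<inter> closure X"
    using assms(2,3) by simp
  ultimately show ?thesis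
    using open_Int_closure_eq_empty by blast
qed

lemma closure_unshadowed_eq_UNIV:
  fixes K :: "(real \<times> real) set"
  assumes "\<not> (\<exists>a b. a < b \<and> {a<..<b} \<subseteq> fst ` K)"
  shows "closure {x. \<forall>y. (x, y) \<notin> K} = UNIV"
proof -
  have "s \<in> closure {x. \<forall>y. (x, y) \<notin> K}" for s
    unfolding closure_approachable
  proof (intro allI impI)
    fix e :: real assume "e > 0"
    then have "s - e < s + e"
      by simp
    then have "\<not> {s - e<..<s + e} \<subseteq> fst ` K"
      using assms by blast
    then obtain x where x: "x \<in> {s - e<..<s + e}" "x \<notin> fst ` K"
      by blast
    have "(x, y) \<notin> K" for y
      using x(2) by (metis fst_conv image_eqI)
    moreover have "dist x s < e"
      using x(1) by (auto simp: dist_real_def abs_less_iff)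
    ultimately show "\<exists>x\<in>{x. \<forall>y. (x, y) \<notin> K}. dist x s < e"
      by blast
  qed
  then show ?thesis
    by blast
qed

lemma shadow_of_graph_separation_contains_interval:
  fixes J :: "real \<Rightarrow> real"
  assumes U: "open U" and V: "open V" and UV: "U \<inter> V = {}"
    and cover: "\<And>x. (x, J x) \<in> U \<union> V" and "(a, J a) \<in> U" "(b, J b) \<in> V"
  shows "\<exists>\<alpha> \<beta>. \<alpha> < \<beta> \<and> {\<alpha><..<\<beta>} \<subseteq> fst ` (- (U \<union> V))"
proof (rule ccontr)
  assume no_interval: "\<not> ?thesis"
  define P where "P = {x. \<forall>y. (x, y) \<in> U \<union> V}"
  define PU where "PU = {x. \<forall>y. (x, y) \<in> U}"
  define PV where "PV = {x. \<forall>y. (x, y) \<in> V}"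
  have dense: "s \<in> closure P" for s
    using closure_unshadowed_eq_UNIV[OF no_interval] by (simp add: P_def)
  have sides: "P \<subseteq> PU \<union> PV"
  proof
    fix x assume "x \<in> P"
    then have line: "{x} \<times> UNIV \<subseteq> U \<union> V"
      by (auto simp: P_def)
    have "connected ({x} \<times> (UNIV :: real set))"
      by (intro connected_Times connected_sing connected_UNIV)
    then have "U \<inter> ({x} \<times> UNIV) = {} \<or> V \<inter> ({x} \<times> UNIV) = {}"
      using connectedD[OF _ U V _ line] UV by blast
    then show "x \<in> PU \<union> PV"
      using line unfolding PU_def PV_def by blast
  qed
  have "PU \<noteq> {}"
  proof -
    obtain x where "x \<in> P" "(x, J a) \<in> U"
      using open_meets_closure_horizontally[OF U \<open>(a, J a) \<in> U\<close> dense] by blast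
    then show ?thesis
      using sides UV unfolding PU_def PV_def by blast
  qed
  moreover have "PV \<noteq> {}"
  proof -
    obtain x where "x \<in> P" "(x, J b) \<in> V"
      using open_meets_closure_horizontally[OF V \<open>(b, J b) \<in> V\<close> dense] by blast
    then show ?thesis
      using sides UV unfolding PU_def PV_def by blast
  qed
  moreover have "closure PU \<union> closure PV = UNIV"
    using closure_mono[OF sides] dense by (auto simp: closure_Un)
  ultimately have "closure PU \<inter> closure PV \<noteq> {}"
    using connected_closedD[OF connected_UNIV, of "closure PU" "closure PV"]
      closure_subset[of PU] closure_subset[of PV] by auto
  then obtain s where s: "s \<in> closure PU" "s \<in> closure PV"
    by blast
  show False
  proof (cases "(s, J s) \<in> U")
    case True
    then obtain x where "x \<in> PV" "(x, J s) \<in> U"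
      using open_meets_closure_horizontally[OF U True s(2)] by blast
    then show False
      using UV unfolding PV_def by blast
  next
    case False
    then have "(s, J s) \<in> V"
      using cover by blast
    then obtain x where "x \<in> PU" "(x, J s) \<in> V"
      using open_meets_closure_horizontally[OF V _ s(1)] by blast
    then show False
      using UV unfolding PU_def by blast
  qed
qed

lemma connected_graph_if_meets_jones_sets:
  fixes J :: "real \<Rightarrow> real"
  assumes meets: "\<And>K. K \<in> jones_sets \<Longrightarrow> \<exists>x. (x, J x) \<in> K"
  shows "connected {(x, J x) | x. True}"
proof (rule ccontr)
  assume "\<not> ?thesis"
  then obtain U V where UV: "open U" "open V" "U \<inter> V = {}" "{(x, J x) | x. True} \<subseteq> U \<union> V"
    "U \<inter> {(x, J x) | x. True} \<noteq> {}" "V \<inter> {(x, J x) | x. True} \<noteq> {}"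
    by (rule not_connected_disjoint_open_cover)
  then obtain a b where "(a, J a) \<in> U" "(b, J b) \<in> V"
    by blast
  with UV have "\<exists>\<alpha> \<beta>. \<alpha> < \<beta> \<and> {\<alpha><..<\<beta>} \<subseteq> fst ` (- (U \<union> V))"
    by (intro shadow_of_graph_separation_contains_interval[of U V J a b]) blast+
  with UV(1,2) have "- (U \<union> V) \<in> jones_sets"
    unfolding jones_sets_def by blast
  then show False
    using meets UV(4) by blast
qed

lemma dense_graph_if_meets_jones_sets:
  fixes J :: "real \<Rightarrow> real"
  assumes meets: "\<And>K. K \<in> jones_sets \<Longrightarrow> \<exists>x. (x, J x) \<in> K"
  shows "closure {(x, J x) | x. True} = UNIV"
proof -
  have "(s, t) \<in> closure {(x, J x) | x. True}" for s t
    unfolding closure_approachable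
  proof (intro allI impI)
    fix e :: real assume "e > 0"
    have "{s - e/2<..<s + e/2} \<subseteq> fst ` cball (s, t) (e/2)"
    proof
      fix x assume "x \<in> {s - e/2<..<s + e/2}"
      then have "(x, t) \<in> cball (s, t) (e/2)"
        by (auto simp: dist_Pair_Pair dist_real_def abs_if)
      then show "x \<in> fst ` cball (s, t) (e/2)"
        by (rule rev_image_eqI) simp
    qed
    with \<open>e > 0\<close> have "cball (s, t) (e/2) \<in> jones_sets"
      unfolding jones_sets_def
      by (intro CollectI conjI closed_cball exI[of _ "s - e/2"] exI[of _ "s + e/2"]) simp_all
    then obtain x where "(x, J x) \<in> cball (s, t) (e/2)"
      using meets by blast
    with \<open>e > 0\<close> have "dist (x, J x) (s, t) < e"
      by (simp add: dist_commute)
    then show "\<exists>z\<in>{(x, J x) | x. True}. dist z (s, t) < e"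
      by blast
  qed
  then show ?thesis
    by auto
qed


section \<open>Additive functions with prescribed dimension of the component\<close>

lemma shear_image_graph:
  fixes g :: "real \<Rightarrow> real" and b :: "'a::real_inner"
  assumes "b \<bullet> b = 1"
  shows "(\<lambda>((t, u), x). (x + (t - x \<bullet> b) *\<^sub>R b, u)) ` ({(t, g t) | t. True} \<times> UNIV) =
    {(x, g (x \<bullet> b)) | x. True}"
proof (intro equalityI subsetI)
  fix z assume "z \<in> (\<lambda>((t, u), x). (x + (t - x \<bullet> b) *\<^sub>R b, u)) ` ({(t, g t) | t. True} \<times> UNIV)"
  then obtain t x where "z = (x + (t - x \<bullet> b) *\<^sub>R b, g t)"
    by auto
  moreover have "(x + (t - x \<bullet> b) *\<^sub>R b) \<bullet> b = t"
    using assms by (simp add: inner_add_left algebra_simps)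
  ultimately show "z \<in> {(x, g (x \<bullet> b)) | x. True}"
    by auto
next
  fix z assume "z \<in> {(x, g (x \<bullet> b)) | x. True}"
  then obtain x where "z = (\<lambda>((t, u), x). (x + (t - x \<bullet> b) *\<^sub>R b, u)) ((x \<bullet> b, g (x \<bullet> b)), x)"
    by auto
  then show "z \<in> (\<lambda>((t, u), x). (x + (t - x \<bullet> b) *\<^sub>R b, u)) ` ({(t, g t) | t. True} \<times> UNIV)"
    by blast
qed

lemma exists_additive_connected_dense_graph:
  "\<exists>f :: 'a::euclidean_space \<Rightarrow> real. Modules.additive f \<and>
     connected {(x, f x) | x. True} \<and> closure {(x, f x) | x. True} = UNIV"
proof -
  obtain J :: "real \<Rightarrow> real" where J: "Modules.additive J" "\<And>K. K \<in> jones_sets \<Longrightarrow> \<exists>x. (x, J x) \<in> K"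
    using exists_additive_graph_meets_jones_sets by blast
  obtain b :: 'a where "b \<in> Basis"
    using nonempty_Basis by blast
  then have "b \<bullet> b = 1"
    by simp
  define f where "f x = J (x \<bullet> b)" for x
  have "Modules.additive f"
    using J(1) unfolding f_def Modules.additive_def by (simp add: inner_add_left)
  define \<Phi> :: "(real \<times> real) \<times> 'a \<Rightarrow> 'a \<times> real"
    where "\<Phi> = (\<lambda>((t, u), x). (x + (t - x \<bullet> b) *\<^sub>R b, u))"
  have cont: "continuous_on A \<Phi>" for A
    unfolding \<Phi>_def case_prod_unfold by (intro continuous_intros)
  have graph_image: "\<Phi> ` ({(t, J t) | t. True} \<times> UNIV) = {(x, f x) | x. True}"
    unfolding \<Phi>_def f_def using \<open>b \<bullet> b = 1\<close> by (rule shear_image_graph)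
  have "connected ({(t, J t) | t. True} \<times> (UNIV :: 'a set))"
    by (intro connected_Times connected_graph_if_meets_jones_sets J(2) connected_UNIV)
  then have "connected {(x, f x) | x. True}"
    unfolding graph_image[symmetric] by (rule connected_continuous_image[OF cont])
  moreover have "closure {(x, f x) | x. True} = UNIV"
  proof -
    have "closure ({(t, J t) | t. True} \<times> (UNIV :: 'a set)) = UNIV"
      using dense_graph_if_meets_jones_sets[OF J(2)] by (simp add: closure_Times)
    moreover have "\<Phi> ` closure ({(t, J t) | t. True} \<times> UNIV) \<subseteq> closure (\<Phi> ` ({(t, J t) | t. True} \<times> UNIV))"
      by (rule image_closure_subset[OF cont closed_closure closure_subset])
    ultimately have "range \<Phi> \<subseteq> closure {(x, f x) | x. True}"
      by (simp only: graph_image)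
    moreover have "(x, y) = \<Phi> ((x \<bullet> b, y), x)" for x y
      by (simp add: \<Phi>_def)
    ultimately show ?thesis
      by (metis UNIV_eq_I rangeI subsetD surj_pair)
  qed
  ultimately show ?thesis
    using \<open>Modules.additive f\<close> by blast
qed

lemma exists_rat_valued_additive_functional:
  "\<exists>r :: real \<Rightarrow> real. Modules.additive r \<and> range r \<subseteq> \<rat> \<and> r 1 = 1"
proof -
  define H where "H = rat_vector.extend_basis {1 :: real}"
  have "rat_vector.independent {1 :: real}"
    using rat_vector.dependent_single[of "1 :: real"] by simp
  then have H: "rat_vector.independent H" "rat_vector.span H = UNIV" "1 \<in> H"
    unfolding H_def
    using rat_vector.independent_extend_basis rat_vector.span_extend_basis
      rat_vector.extend_basis_superset by blast+
  define r :: "real \<Rightarrow> real" where "r t = of_rat (rat_vector.representation H t 1)" for t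
  have span: "t \<in> rat_vector.span H" for t
    using H(2) by blast
  have representation_add: "rat_vector.representation H (u + v) 1 =
      rat_vector.representation H u 1 + rat_vector.representation H v 1" for u v
    by (simp only: rat_vector.representation_add[OF H(1) span span])
  show ?thesis
  proof (intro exI[of _ r] conjI subsetI)
    show "Modules.additive r"
      unfolding Modules.additive_def r_def by (intro allI) (simp only: representation_add of_rat_add)
    show "t \<in> \<rat>" if "t \<in> range r" for t
      using that unfolding r_def by (auto intro: Rats_of_rat)
    show "r 1 = 1"
      unfolding r_def rat_vector.representation_basis[OF H(1,3)] by simp
  qed
qed

lemma exists_finite_rat_independent:
  "\<exists>T :: real set. finite T \<and> card T = n \<and> rat_vector.independent T"
proof -
  define H :: "real set" where "H = rat_vector.extend_basis {}"
  have H: "rat_vector.independent H" "rat_vector.span H = UNIV"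
    unfolding H_def
    by (rule rat_vector.independent_extend_basis[OF rat_vector.independent_empty],
        rule rat_vector.span_extend_basis[OF rat_vector.independent_empty])
  have "infinite H"
  proof
    assume "finite H"
    then have "countable (rat_vector.span H)"
      by (intro countable_rat_span countable_finite)
    with H(2) uncountable_UNIV_real show False
      by metis
  qed
  then obtain T where "T \<subseteq> H" "finite T" "card T = n"
    using infinite_arbitrarily_large by blast
  then show ?thesis
    using rat_vector.independent_mono[OF H(1)] by blast
qed

lemma rat_combination_in_rat_span:
  fixes c \<beta> :: "'i \<Rightarrow> real"
  assumes "\<And>e. e \<in> E \<Longrightarrow> c e \<in> \<rat>"
  shows "(\<Sum>e\<in>E. c e * \<beta> e) \<in> rat_vector.span (\<beta> ` E)"
proof (rule rat_vector.span_sum)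
  fix e assume "e \<in> E"
  then obtain q where "c e = of_rat q"
    using assms by (blast elim: Rats_cases)
  then have "c e * \<beta> e = of_rat q *\<^sub>R \<beta> e"
    by simp
  then show "c e * \<beta> e \<in> rat_vector.span (\<beta> ` E)"
    using \<open>e \<in> E\<close> by (simp only:) (intro rat_vector.span_scale rat_vector.span_base imageI)
qed

lemma rat_independent_combination_eq_0:
  fixes c \<beta> :: "'i \<Rightarrow> real"
  assumes "rat_vector.independent (\<beta> ` E)" "inj_on \<beta> E" "finite E"
    and "\<And>e. e \<in> E \<Longrightarrow> c e \<in> \<rat>" "(\<Sum>e\<in>E. c e * \<beta> e) = 0" "e \<in> E"
  shows "c e = 0"
proof -
  define u where "u v = inv of_rat (c (inv_into E \<beta> v))" for v
  have u: "of_rat (u (\<beta> e)) = c e" if "e \<in> E" for e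
    using assms(4)[OF that] unfolding u_def inv_into_f_f[OF assms(2) that] Rats_def
    by (rule f_inv_into_f)
  have "(\<Sum>v\<in>\<beta> ` E. of_rat (u v) *\<^sub>R v) = (\<Sum>e\<in>E. c e * \<beta> e)"
    by (simp add: sum.reindex[OF assms(2)] u)
  then have "u (\<beta> e) = 0"
    using rat_vector.independentD[OF assms(1) finite_imageI[OF assms(3)] subset_refl] assms(5,6) by auto
  then show ?thesis
    using u[OF assms(6)] by simp
qed

lemma dim_coordinate_subspace:
  fixes D :: "'a::euclidean_space set"
  assumes "D \<subseteq> Basis"
  shows "dim {z :: 'a \<times> real. snd z = 0 \<and> (\<forall>e\<in>Basis - D. fst z \<bullet> e = 0)} = card D"
proof -
  let ?D = "(\<lambda>d. (d, 0 :: real)) ` D"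
  have eq: "{z :: 'a \<times> real. snd z = 0 \<and> (\<forall>e\<in>Basis - D. fst z \<bullet> e = 0)} =
      {z. \<forall>i\<in>Basis. i \<notin> ?D \<longrightarrow> z \<bullet> i = 0}"
  proof (intro equalityI subsetI CollectI; elim CollectE)
    fix z :: "'a \<times> real"
    assume z: "snd z = 0 \<and> (\<forall>e\<in>Basis - D. fst z \<bullet> e = 0)"
    show "\<forall>i\<in>Basis. i \<notin> ?D \<longrightarrow> z \<bullet> i = 0"
    proof (intro ballI impI)
      fix i :: "'a \<times> real" assume "i \<in> Basis" "i \<notin> ?D"
      then consider e where "e \<in> Basis - D" "i = (e, 0)" | "i = (0, 1)"
        by (auto simp: Basis_prod_def)
      then show "z \<bullet> i = 0"
        using z by cases (simp_all add: inner_Pair_0)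
    qed
  next
    fix z :: "'a \<times> real"
    assume z: "\<forall>i\<in>Basis. i \<notin> ?D \<longrightarrow> z \<bullet> i = 0"
    have "(0, 1) \<in> (Basis :: ('a \<times> real) set)" "(0, 1) \<notin> ?D"
      by (auto simp: Basis_prod_def)
    then have "z \<bullet> (0, 1) = 0"
      using z by blast
    moreover have "z \<bullet> (e, 0) = 0" if "e \<in> Basis - D" for e
    proof -
      have "(e, 0) \<in> (Basis :: ('a \<times> real) set)" "(e, 0) \<notin> ?D"
        using that by (auto simp: Basis_prod_def)
      then show ?thesis
        using z by blast
    qed
    ultimately show "snd z = 0 \<and> (\<forall>e\<in>Basis - D. fst z \<bullet> e = 0)"
      by (simp add: inner_Pair_0)
  qed
  have "?D \<subseteq> Basis"
    using assms by (auto simp: Basis_prod_def)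
  moreover have "card ?D = card D"
    by (simp add: card_image inj_on_def)
  ultimately show ?thesis
    unfolding eq by (simp only: dim_substandard)
qed

lemma connected_component_graph_eq_coordinate_subspace:
  fixes D :: "'a::euclidean_space set" and r :: "real \<Rightarrow> real" and \<beta> :: "'a \<Rightarrow> real"
  assumes r: "Modules.additive r" "range r \<subseteq> \<rat>" "r 1 = 1"
    and \<beta>: "inj_on \<beta> (Basis - D)" "rat_vector.independent (\<beta> ` (Basis - D))"
  defines "f x \<equiv> \<Sum>e\<in>Basis - D. r (x \<bullet> e) * \<beta> e"
  shows "connected_component_set {(x, f x) | x. True} 0 =
    {z. snd z = 0 \<and> (\<forall>e\<in>Basis - D. fst z \<bullet> e = 0)}"
    (is "?G = ?S")
proof
  interpret r: Modules.additive r by fact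
  have "0 \<in> {(x, f x) | x. True}"
    by (simp add: f_def r.zero zero_prod_def)
  show "?S \<subseteq> ?G"
  proof (rule connected_component_maximal)
    show "0 \<in> ?S"
      by simp
    have "subspace ?S"
      by (auto simp: subspace_def inner_add_left)
    then show "connected ?S"
      by (simp add: subspace_imp_convex convex_connected)
    show "?S \<subseteq> {(x, f x) | x. True}"
      by (force simp: f_def r.zero)
  qed
  have G: "connected ?G" "?G \<subseteq> {(x, f x) | x. True}" "0 \<in> ?G"
    using \<open>0 \<in> {(x, f x) | x. True}\<close> connected_component_subset by auto
  have f_span: "f x \<in> rat_vector.span (\<beta> ` (Basis - D))" for x
    unfolding f_def using r(2) by (intro rat_combination_in_rat_span) blast
  have "countable (rat_vector.span (\<beta> ` (Basis - D)))"
    by (intro countable_rat_span countable_finite finite_imageI) simp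
  then have proper: "rat_vector.span (\<beta> ` (Basis - D)) \<noteq> UNIV"
    using uncountable_UNIV_real by metis
  have "snd ` ?G \<subseteq> {0}"
  proof (rule connected_subset_proper_rat_vector_subspace[OF rat_vector.subspace_span proper])
    show "connected (snd ` ?G)"
      using G(1) by (intro connected_continuous_image continuous_intros)
    show "snd ` ?G \<subseteq> rat_vector.span (\<beta> ` (Basis - D))"
      using G(2) f_span by fastforce
    show "0 \<in> snd ` ?G"
      by (rule rev_image_eqI[OF G(3)]) simp
  qed
  then have f0: "f (fst z) = 0" if "z \<in> ?G" for z
    using that G(2) by force
  have "(\<lambda>z. fst z \<bullet> e) ` ?G \<subseteq> {0}" if "e \<in> Basis - D" for e
  proof (rule connected_subset_proper_rat_vector_subspace[OF rat_vector_subspace_kernel[OF r(1)]])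
    show "{t. r t = 0} \<noteq> UNIV"
      using r(3) by (metis UNIV_I mem_Collect_eq one_neq_zero)
    show "connected ((\<lambda>z. fst z \<bullet> e) ` ?G)"
      using G(1) by (intro connected_continuous_image continuous_intros)
    show "(\<lambda>z. fst z \<bullet> e) ` ?G \<subseteq> {t. r t = 0}"
    proof (intro subsetI, elim imageE)
      fix t z assume "t = fst z \<bullet> e" "z \<in> ?G"
      have sum0: "(\<Sum>e\<in>Basis - D. r (fst z \<bullet> e) * \<beta> e) = 0"
        using f0[OF \<open>z \<in> ?G\<close>] by (simp add: f_def)
      have "r (fst z \<bullet> e) = 0"
        by (rule rat_independent_combination_eq_0[OF \<beta>(2,1) _ _ sum0 that])
          (use r(2) in \<open>auto intro: range_subsetD\<close>)
      then show "t \<in> {t. r t = 0}"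
        using \<open>t = fst z \<bullet> e\<close> by simp
    qed
    show "0 \<in> (\<lambda>z. fst z \<bullet> e) ` ?G"
      by (rule rev_image_eqI[OF G(3)]) simp
  qed
  then show "?G \<subseteq> ?S"
    using \<open>snd ` ?G \<subseteq> {0}\<close> by blast
qed


lemma exists_additive_graph_component_dim:
  fixes s :: nat
  assumes "s \<le> DIM('a::euclidean_space) + 1"
  shows "\<exists>f :: 'a \<Rightarrow> real. Modules.additive f \<and>
    dim (closure (connected_component_set {(x, f x) | x. True} 0)) = s"
proof (cases "s = DIM('a) + 1")
  case True
  obtain f :: "'a \<Rightarrow> real" where f: "Modules.additive f"
    "connected {(x, f x) | x. True}" "closure {(x, f x) | x. True} = UNIV"
    using exists_additive_connected_dense_graph by blast
  have "0 \<in> {(x, f x) | x. True}"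
    by (simp add: Modules.additive.zero[OF f(1)] zero_prod_def)
  then have component: "connected_component_set {(x, f x) | x. True} 0 = {(x, f x) | x. True}"
    by (rule connected_component_eq_self[OF f(2)])
  have "dim (closure (connected_component_set {(x, f x) | x. True} 0)) = s"
    unfolding component f(3) using True by simp
  with f(1) show ?thesis
    by blast
next
  case False
  with assms have "s \<le> card (Basis :: 'a set)"
    by simp
  then obtain D :: "'a set" where D: "D \<subseteq> Basis" "card D = s"
    by (rule obtain_subset_with_card_n) auto
  obtain r :: "real \<Rightarrow> real" where r: "Modules.additive r" "range r \<subseteq> \<rat>" "r 1 = 1"
    using exists_rat_valued_additive_functional by blast
  obtain T :: "real set" where T: "finite T" "card T = card (Basis - D :: 'a set)" "rat_vector.independent T"
    using exists_finite_rat_independent by blast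
  then obtain \<beta> :: "'a \<Rightarrow> real" where \<beta>: "bij_betw \<beta> (Basis - D) T"
    using finite_same_card_bij[of "Basis - D" T] by auto
  define f where "f x = (\<Sum>e\<in>Basis - D. r (x \<bullet> e) * \<beta> e)" for x :: 'a
  have "Modules.additive f"
  proof
    interpret r: Modules.additive r by fact
    show "f (x + y) = f x + f y" for x y
      by (simp add: f_def inner_add_left r.add distrib_right sum.distrib)
  qed
  moreover have "connected_component_set {(x, f x) | x. True} 0 =
      {z. snd z = 0 \<and> (\<forall>e\<in>Basis - D. fst z \<bullet> e = 0)}"
    unfolding f_def
    using \<beta> T(3) by (intro connected_component_graph_eq_coordinate_subspace[OF r]) (auto simp: bij_betw_def)
  moreover have "subspace {z :: 'a \<times> real. snd z = 0 \<and> (\<forall>e\<in>Basis - D. fst z \<bullet> e = 0)}"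
    by (auto simp: subspace_def inner_add_left)
  ultimately have "dim (closure (connected_component_set {(x, f x) | x. True} 0)) = s"
    using dim_coordinate_subspace[OF D(1)] D(2) by (simp only: closure_closed closed_subspace)
  with \<open>Modules.additive f\<close> show ?thesis
    by blast
qed

theorem theorem3:
  shows "(\<forall>f :: real^'n \<Rightarrow> real. Modules.additive f \<longrightarrow>
            (\<exists>s \<le> CARD('n) + 1. \<exists>V. comp_struct f s V))
       \<and> (\<forall>s \<le> CARD('n) + 1. \<exists>f :: real^'n \<Rightarrow> real. Modules.additive f \<and> (\<exists>V. comp_struct f s V))"
proof (intro conjI allI impI)
  fix f :: "real^'n \<Rightarrow> real"
  assume "Modules.additive f"
  let ?V = "closure (connected_component_set (fgraph f) 0)"
  have "dim ?V \<le> CARD('n) + 1"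
    using dim_subset_UNIV[of ?V] by simp
  with comp_struct_closure_connected_component[OF \<open>Modules.additive f\<close>]
  show "\<exists>s \<le> CARD('n) + 1. \<exists>V. comp_struct f s V"
    by blast
next
  fix s :: nat
  assume "s \<le> CARD('n) + 1"
  then obtain f :: "real^'n \<Rightarrow> real" where f: "Modules.additive f"
    "dim (closure (connected_component_set (fgraph f) 0)) = s"
    using exists_additive_graph_component_dim[where 'a="real^'n", of s] unfolding fgraph_def by auto
  then show "\<exists>f :: real^'n \<Rightarrow> real. Modules.additive f \<and> (\<exists>V. comp_struct f s V)"
    using comp_struct_closure_connected_component[OF f(1)] by metis
qed

end
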